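(* Let $P$ be a positive opetope of dimension $n$ and let $\vec x,\vec x'$ be maximal flags of $P$ such that $\vec x'$ is the immediate $\lhd$-successor of $\vec x$. Then the intersection $\vec x\cap\vec x'$ is a p-flag; if $\mathrm{sgn}(\vec x)=+1$ it is a high p-flag, and if $\mathrm{sgn}(\vec x)=-1$ it is a low p-flag.
   Context: A positive hypergraph $S$ consists of finite sets $S_k$ ($k\in\mathbb{N}$), only finitely many nonempty, functions $\gamma:S_{k+1}\to S_k$, and for each $k$ an assignment $\delta$ sending each $a\in S_{k+1}$ to a nonempty subset $\delta(a)\subseteq S_k$, with $\delta(a)$ a singleton for $a\in S_1$. A face is identified with its singleton; $\gamma(X)=\{\gamma(a):a\in X\}$, $\delta(X)=\bigcup_{a\in X}\delta(a)$. For $k>0$ the lower order $<^-$ on $S_k$ is the transitive closure of: $a\lhd b$ iff $\gamma(a)\in\delta(b)$. The upper order $<^+$ on $S_k$ is the transitive closure of: $a\lhd b$ iff there is $\alpha\in S_{k+1}$ with $a\in\delta(\alpha)$, $\gamma(\alpha)=b$; $a\perp^{\pm}b$ iff $a<^{\pm}b$ or $b<^{\pm}a$. A positive opetopic cardinal: $S_0\ne\emptyset$; globularity ($\gamma\gamma(a)=\gamma\delta(a)-\delta\delta(a)$, $\delta\gamma(a)=\delta\delta(a)-\gamma\delta(a)$ for $\dim a\ge2$); each $<^+$ a strict order, linear on $S_0$; for $k>0$, $\perp^-\cap\perp^+=\emptyset$ on $S_k$; for $x\in S_{k-1}$, $\{a:\gamma(a)=x\}$ and $\{a:x\in\delta(a)\}$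 linearly ordered by $<^+$. A positive opetope: additionally $|P_m-\delta(P_{m+1})|\le1$ for all $m$; if $\dim P=n$ then $P_n=\{\mathbf m_P\}$. Write $\partial(a)=\{\gamma(a)\}\cup\delta(a)$. A maximal flag is a sequence $\vec{x}=[x_n,\dots,x_0]$ with $x_n=\mathbf m_P$, $x_i\in P_i$ and $x_i\in\partial(x_{i+1})$ for $i<n$. The sign of $[x_k,\dots,x_l]$ is $1$ if $k=l$, equals $\mathrm{sgn}([x_{k-1},\dots,x_l])$ if $x_{k-1}=\gamma(x_k)$, and equals $-\mathrm{sgn}([x_{k-1},\dots,x_l])$ if $x_{k-1}\in\delta(x_k)$; $\mathrm{sgn}(\vec x)=\mathrm{sgn}([x_n,\dots,x_0])$. For $x\in P_k$, on $\{a\in P_{k+1}: x\in\partial(a)\}$ define $a\prec_x b$ iff (i) $\gamma(b)=x\in\delta(a)$, or (ii) $x\in\delta(a)\cap\delta(b)$ and $a<^+b$, or (iii) $\gamma(a)=x=\gamma(b)$ and $b<^+a$. For distinct maximal flags $\vec x,\vec y$ with $k=\min\{j:x_j\ne y_j\}$, put $\vec x\lhd\vec y$ iff $k=0$ and $y_0<^+x_0$; or $k>0$, $\mathrm{sgn}([x_{k-1},\dots,x_0])=1$ and $x_k\prec_{x_{k-1}}y_k$; or $k>0$, $\mathrm{sgn}([x_{k-1},\dots,x_0])=-1$ and $y_k\prec_{x_{k-1}}x_k$ (a strict linear order). For a maximal flag $\vec x$ neither $\lhd$-first nor $\lhd$-last, $\mathrm{ll}(\vec x)=\max\{i<n-1: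 x_{i+1}\in\delta(x_{i+2})\}$. For a maximal flag $\vec x$ and a level $i$, $\vec x_{(i)}$ is the sequence obtained from $\vec x$ by replacing $x_i$ by a dummy symbol $0$. A high p-flag is a sequence $\vec x_{(n-1)}$ for some maximal flag $\vec x$; a low p-flag is a sequence $\vec x_{(\mathrm{ll}(\vec x))}$ for some maximal flag $\vec x$ for which $\mathrm{ll}$ is defined; a p-flag is a high or low p-flag. The intersection $\vec x\cap\vec y$ of two maximal flags is the sequence whose entry at level $i$ is $x_i$ if $x_i=y_i$ and $0$ otherwise. *)

theory Defs
  imports Main
begin

text \<open>A positive hypergraph: S k is the (finite) set of k-dimensional faces,
  g is gamma (target), d is delta (source set).  Faces of different dimension
  are distinct elements of the ambient type.\<close>

definition pos_hypergraph :: "(nat \<Rightarrow> 'a set) \<Rightarrow> ('a \<Rightarrow> 'a) \<Rightarrow> ('a \<Rightarrow> 'a set) \<Rightarrow> bool" where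
  "pos_hypergraph S g d \<longleftrightarrow>
     (\<forall>k. finite (S k)) \<and>
     (\<exists>N. \<forall>k\<ge>N. S k = {}) \<and>
     (\<forall>k l. k \<noteq> l \<longrightarrow> S k \<inter> S l = {}) \<and>
     (\<forall>k. \<forall>a\<in>S (Suc k). g a \<in> S k \<and> d a \<noteq> {} \<and> d a \<subseteq> S k) \<and>
     (\<forall>a\<in>S 1. \<exists>x. d a = {x})"

definition bd :: "('a \<Rightarrow> 'a) \<Rightarrow> ('a \<Rightarrow> 'a set) \<Rightarrow> 'a \<Rightarrow> 'a set" where
  "bd g d a = insert (g a) (d a)"

definition lower_rel :: "(nat \<Rightarrow> 'a set) \<Rightarrow> ('a \<Rightarrow> 'a) \<Rightarrow> ('a \<Rightarrow> 'a set) \<Rightarrow> nat \<Rightarrow> ('a \<times> 'a) set" where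
  "lower_rel S g d k = {(a, b). a \<in> S k \<and> b \<in> S k \<and> g a \<in> d b}"

definition upper_rel :: "(nat \<Rightarrow> 'a set) \<Rightarrow> ('a \<Rightarrow> 'a) \<Rightarrow> ('a \<Rightarrow> 'a set) \<Rightarrow> nat \<Rightarrow> ('a \<times> 'a) set" where
  "upper_rel S g d k = {(a, b). a \<in> S k \<and> b \<in> S k \<and> (\<exists>\<alpha>\<in>S (Suc k). a \<in> d \<alpha> \<and> g \<alpha> = b)}"

definition lower_lt :: "(nat \<Rightarrow> 'a set) \<Rightarrow> ('a \<Rightarrow> 'a) \<Rightarrow> ('a \<Rightarrow> 'a set) \<Rightarrow> nat \<Rightarrow> ('a \<times> 'a) set" where
  "lower_lt S g d k = (lower_rel S g d k)\<^sup>+"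

definition upper_lt :: "(nat \<Rightarrow> 'a set) \<Rightarrow> ('a \<Rightarrow> 'a) \<Rightarrow> ('a \<Rightarrow> 'a set) \<Rightarrow> nat \<Rightarrow> ('a \<times> 'a) set" where
  "upper_lt S g d k = (upper_rel S g d k)\<^sup>+"

definition perp :: "('a \<times> 'a) set \<Rightarrow> 'a \<Rightarrow> 'a \<Rightarrow> bool" where
  "perp r a b \<longleftrightarrow> (a, b) \<in> r \<or> (b, a) \<in> r"

definition pos_opetopic_cardinal :: "(nat \<Rightarrow> 'a set) \<Rightarrow> ('a \<Rightarrow> 'a) \<Rightarrow> ('a \<Rightarrow> 'a set) \<Rightarrow> bool" where
  "pos_opetopic_cardinal S g d \<longleftrightarrow>
     pos_hypergraph S g d \<and>
     S 0 \<noteq> {} \<and>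
     (\<forall>k\<ge>2. \<forall>a\<in>S k.
        {g (g a)} = g ` d a - \<Union> (d ` d a) \<and>
        d (g a) = \<Union> (d ` d a) - g ` d a) \<and>
     (\<forall>k. \<forall>a\<in>S k. (a, a) \<notin> upper_lt S g d k) \<and>
     (\<forall>a\<in>S 0. \<forall>b\<in>S 0. a \<noteq> b \<longrightarrow> perp (upper_lt S g d 0) a b) \<and>
     (\<forall>k>0. \<forall>a\<in>S k. \<forall>b\<in>S k.
        \<not> (perp (lower_lt S g d k) a b \<and> perp (upper_lt S g d k) a b)) \<and>
     (\<forall>k. \<forall>x\<in>S k. \<forall>a\<in>S (Suc k). \<forall>b\<in>S (Suc k).
        a \<noteq> b \<longrightarrow>
        ((g a = x \<and> g b = x) \<longrightarrow> perp (upper_lt S g d (Suc k)) a b) \<and>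
        ((x \<in> d a \<and> x \<in> d b) \<longrightarrow> perp (upper_lt S g d (Suc k)) a b))"

definition has_dim :: "(nat \<Rightarrow> 'a set) \<Rightarrow> nat \<Rightarrow> bool" where
  "has_dim S n \<longleftrightarrow> S n \<noteq> {} \<and> (\<forall>k>n. S k = {})"

definition pos_opetope :: "(nat \<Rightarrow> 'a set) \<Rightarrow> ('a \<Rightarrow> 'a) \<Rightarrow> ('a \<Rightarrow> 'a set) \<Rightarrow> bool" where
  "pos_opetope S g d \<longleftrightarrow>
     pos_opetopic_cardinal S g d \<and>
     (\<forall>m. card (S m - \<Union> (d ` S (Suc m))) \<le> 1) \<and>
     (\<forall>n. has_dim S n \<longrightarrow> (\<exists>m. S n = {m}))"

text \<open>Maximal flags are lists of length n+1, indexed by level: x ! i = x_i.\<close>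
definition max_flag :: "(nat \<Rightarrow> 'a set) \<Rightarrow> ('a \<Rightarrow> 'a) \<Rightarrow> ('a \<Rightarrow> 'a set) \<Rightarrow> nat \<Rightarrow> 'a list \<Rightarrow> bool" where
  "max_flag S g d n x \<longleftrightarrow>
     length x = Suc n \<and> x ! n = the_elem (S n) \<and>
     (\<forall>i\<le>n. x ! i \<in> S i) \<and>
     (\<forall>i<n. x ! i \<in> bd g d (x ! Suc i))"

text \<open>sgnto g x k = sgn([x_k, ..., x_0]).\<close>
fun sgnto :: "('a \<Rightarrow> 'a) \<Rightarrow> 'a list \<Rightarrow> nat \<Rightarrow> int" where
  "sgnto g x 0 = 1"
| "sgnto g x (Suc k) = (if x ! k = g (x ! Suc k) then sgnto g x k else - sgnto g x k)"

definition flag_sgn :: "('a \<Rightarrow> 'a) \<Rightarrow> nat \<Rightarrow> 'a list \<Rightarrow> int" where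
  "flag_sgn g n x = sgnto g x n"

text \<open>prec S g d k x a b : a \<prec>_x b, for a, b in S k and x in S (k-1).\<close>
definition prec :: "(nat \<Rightarrow> 'a set) \<Rightarrow> ('a \<Rightarrow> 'a) \<Rightarrow> ('a \<Rightarrow> 'a set) \<Rightarrow> nat \<Rightarrow> 'a \<Rightarrow> 'a \<Rightarrow> 'a \<Rightarrow> bool" where
  "prec S g d k x a b \<longleftrightarrow>
     (g b = x \<and> x \<in> d a) \<or>
     (x \<in> d a \<and> x \<in> d b \<and> (a, b) \<in> upper_lt S g d k) \<or>
     (g a = x \<and> g b = x \<and> (b, a) \<in> upper_lt S g d k)"

definition flag_lt :: "(nat \<Rightarrow> 'a set) \<Rightarrow> ('a \<Rightarrow> 'a) \<Rightarrow> ('a \<Rightarrow> 'a set) \<Rightarrow> 'a list \<Rightarrow> 'a list \<Rightarrow> bool" where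
  "flag_lt S g d x y \<longleftrightarrow> x \<noteq> y \<and>
     (let k = (LEAST j. x ! j \<noteq> y ! j) in
       (k = 0 \<and> (y ! 0, x ! 0) \<in> upper_lt S g d 0) \<or>
       (k > 0 \<and> sgnto g x (k - 1) = 1 \<and> prec S g d k (x ! (k - 1)) (x ! k) (y ! k)) \<or>
       (k > 0 \<and> sgnto g x (k - 1) = -1 \<and> prec S g d k (x ! (k - 1)) (y ! k) (x ! k)))"

definition ll_set :: "('a \<Rightarrow> 'a set) \<Rightarrow> nat \<Rightarrow> 'a list \<Rightarrow> nat set" where
  "ll_set d n x = {i. i < n - 1 \<and> x ! Suc i \<in> d (x ! Suc (Suc i))}"

text \<open>x_(i): replace the entry at level i by the dummy symbol 0 (None).\<close>
definition punct :: "'a list \<Rightarrow> nat \<Rightarrow> 'a option list" where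
  "punct x i = (map Some x)[i := None]"

definition flag_inter :: "'a list \<Rightarrow> 'a list \<Rightarrow> 'a option list" where
  "flag_inter x y = map2 (\<lambda>a b. if a = b then Some a else None) x y"

definition high_pflag :: "(nat \<Rightarrow> 'a set) \<Rightarrow> ('a \<Rightarrow> 'a) \<Rightarrow> ('a \<Rightarrow> 'a set) \<Rightarrow> nat \<Rightarrow> 'a option list \<Rightarrow> bool" where
  "high_pflag S g d n p \<longleftrightarrow> (\<exists>y. max_flag S g d n y \<and> p = punct y (n - 1))"

definition low_pflag :: "(nat \<Rightarrow> 'a set) \<Rightarrow> ('a \<Rightarrow> 'a) \<Rightarrow> ('a \<Rightarrow> 'a set) \<Rightarrow> nat \<Rightarrow> 'a option list \<Rightarrow> bool" where
  "low_pflag S g d n p \<longleftrightarrow> (\<exists>y. max_flag S g d n y \<and>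
     (\<exists>z. max_flag S g d n z \<and> flag_lt S g d z y) \<and>
     (\<exists>z. max_flag S g d n z \<and> flag_lt S g d y z) \<and>
     ll_set d n y \<noteq> {} \<and>
     p = punct y (Max (ll_set d n y)))"

definition pflag :: "(nat \<Rightarrow> 'a set) \<Rightarrow> ('a \<Rightarrow> 'a) \<Rightarrow> ('a \<Rightarrow> 'a set) \<Rightarrow> nat \<Rightarrow> 'a option list \<Rightarrow> bool" where
  "pflag S g d n p \<longleftrightarrow> high_pflag S g d n p \<or> low_pflag S g d n p"

end

theory Submission
  imports Defs
begin

(* Every maximal flag y except the last one has an explicit successor: replace its entry at
   level j by the partner face, where j = n - 1 if sgn y = +1 and j = ll(y) if sgn y = -1, and the
   partner of y_j is the unique other face b with y_{j-1} in the boundary of b and b in the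
   boundary of y_{j+1}. Existence and uniqueness of the partner (the diamond property) follow from
   globularity together with the disjointness of the lower and upper orders. The swap reverses
   the sign of the flag above level j, and the local order on the two faces through y_{j-1}
   shows that the new flag is larger. This partial successor map is injective and defined on all
   flags but one, so counting the flags above x' shows that it is the immediate-successor map.
   Then x and x' differ exactly at the swapped level, so their intersection is the high p-flag
   of x when sgn x = +1 and the low p-flag of x' (whose ll is the swapped level) when
   sgn x = -1. *)

text \<open>The successor map sends \<open>x\<close> together with the elements of \<open>D\<close> above \<open>x'\<close> injectively
  into the elements strictly above \<open>x'\<close>, which are too few unless \<open>succ x = x'\<close>.\<close>

lemma immediate_successor_by_counting:
  fixes less :: "'b \<Rightarrow> 'b \<Rightarrow> bool" and succ :: "'b \<Rightarrow> 'b"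
  assumes "finite F"
    and trans: "\<And>a b c. a \<in> F \<Longrightarrow> b \<in> F \<Longrightarrow> c \<in> F \<Longrightarrow> less a b \<Longrightarrow> less b c \<Longrightarrow> less a c"
    and irrefl: "\<And>a. \<not> less a a"
    and total: "\<And>a b. a \<in> F \<Longrightarrow> b \<in> F \<Longrightarrow> a \<noteq> b \<Longrightarrow> less a b \<or> less b a"
    and D: "D \<subseteq> F" "succ ` D \<subseteq> F" "inj_on succ D"
    and succ_greater: "\<And>a. a \<in> D \<Longrightarrow> less a (succ a)"
    and few_last: "card (F - D) \<le> 1"
    and x: "x \<in> F" "x' \<in> F" "less x x'"
    and immediate: "\<not> (\<exists>z\<in>F. less x z \<and> less z x')"
  shows "x \<in> D \<and> succ x = x'"
proof (rule ccontr)
  assume contra: "\<not> (x \<in> D \<and> succ x = x')"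
  define T where "T = {y \<in> F. y = x' \<or> less x' y}"
  define A where "A = (D \<inter> T) \<union> (D \<inter> {x})"
  have "finite T" "x' \<in> T" using \<open>finite F\<close> x unfolding T_def by auto
  have "x \<notin> T" using x trans irrefl unfolding T_def by blast
  have succ_above: "succ a \<in> T - {x'}" if "a \<in> A" for a
  proof -
    have "a \<in> D" "succ a \<in> F" using that D unfolding A_def by auto
    moreover have "less x' (succ a)"
    proof (cases "a = x")
      case True
      then have "succ x \<noteq> x'" using contra \<open>a \<in> D\<close> by blast
      then show ?thesis using total[of x' "succ x"] immediate succ_greater \<open>a \<in> D\<close> \<open>succ a \<in> F\<close> x True
        by blast
    next
      case False
      then have "a \<in> T" using that unfolding A_def by blast
      then show ?thesis using succ_greater[OF \<open>a \<in> D\<close>] trans[of x' a "succ a"] \<open>succ a \<in> F\<close> x(2)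
        unfolding T_def by auto
    qed
    ultimately show ?thesis using irrefl unfolding T_def by auto
  qed
  have "inj_on succ A" by (rule inj_on_subset[OF D(3)]) (auto simp: A_def)
  moreover have "succ ` A \<subseteq> T - {x'}" using succ_above by blast
  ultimately have "card A \<le> card (T - {x'})"
    using \<open>finite T\<close> by (intro card_inj_on_le) auto
  moreover have "card T \<le> card A"
  proof -
    have "card (T - D) \<le> card (D \<inter> {x})"
    proof (cases "x \<in> D")
      case True
      have "card (T - D) \<le> card (F - D)" using \<open>finite F\<close> by (intro card_mono) (auto simp: T_def)
      then show ?thesis using True few_last by simp
    next
      case False
      have "\<forall>a\<in>F - D. \<forall>b\<in>F - D. a = b"
        using few_last \<open>finite F\<close> card_le_Suc0_iff_eq[of "F - D"] by simp
      then have "F - D \<subseteq> {x}" using False x(1) by auto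
      then have "T - D = {}" using \<open>x \<notin> T\<close> unfolding T_def by auto
      then show ?thesis by (metis card.empty le0)
    qed
    moreover have "card T = card (D \<inter> T) + card (T - D)"
      using \<open>finite T\<close> card_Int_Diff[of T D] by (simp add: Int_commute)
    moreover have "card A = card (D \<inter> T) + card (D \<inter> {x})"
      using \<open>finite T\<close> \<open>x \<notin> T\<close> unfolding A_def by (intro card_Un_disjoint) auto
    ultimately show ?thesis by linarith
  qed
  moreover have "card (T - {x'}) < card T" using \<open>finite T\<close> \<open>x' \<in> T\<close> by (rule card_Diff1_less)
  ultimately show False by linarith
qed

lemma sgnto_eq_1_or_minus_1: "sgnto g y k = 1 \<or> sgnto g y k = -1"
  by (induction k) auto

lemma sgnto_cong: "(\<And>i. i \<le> k \<Longrightarrow> x ! i = y ! i) \<Longrightarrow> sgnto g x k = sgnto g y k"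
  by (induction k) auto

lemma first_difference:
  assumes "length x = length y" "x \<noteq> y"
  obtains k where "k < length x" "\<And>i. i < k \<Longrightarrow> x ! i = y ! i" "x ! k \<noteq> y ! k"
proof -
  have ex: "\<exists>j. j < length x \<and> x ! j \<noteq> y ! j" using assms nth_equalityI by blast
  define k where "k = (LEAST j. j < length x \<and> x ! j \<noteq> y ! j)"
  have "k < length x \<and> x ! k \<noteq> y ! k" unfolding k_def using LeastI_ex[OF ex] .
  moreover have "x ! i = y ! i" if "i < k" for i
    using not_less_Least[of i "\<lambda>j. j < length x \<and> x ! j \<noteq> y ! j"] that calculation
    unfolding k_def by auto
  ultimately show thesis using that by blast
qed

definition flag_lt_at :: "(nat \<Rightarrow> 'a set) \<Rightarrow> ('a \<Rightarrow> 'a) \<Rightarrow> ('a \<Rightarrow> 'a set) \<Rightarrow> 'a list \<Rightarrow> 'a list \<Rightarrow> nat \<Rightarrow> bool" where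
  "flag_lt_at S g d x y k \<longleftrightarrow>
     (k = 0 \<and> (y ! 0, x ! 0) \<in> upper_lt S g d 0) \<or>
     (k > 0 \<and> sgnto g x (k - 1) = 1 \<and> prec S g d k (x ! (k - 1)) (x ! k) (y ! k)) \<or>
     (k > 0 \<and> sgnto g x (k - 1) = -1 \<and> prec S g d k (x ! (k - 1)) (y ! k) (x ! k))"

lemma flag_lt_iff_flag_lt_at:
  assumes "k < length x" "\<And>i. i < k \<Longrightarrow> x ! i = y ! i" "x ! k \<noteq> y ! k"
  shows "flag_lt S g d x y \<longleftrightarrow> flag_lt_at S g d x y k"
proof -
  have "(LEAST j. x ! j \<noteq> y ! j) = k"
    by (rule Least_equality) (use assms(2,3) in \<open>auto simp: not_less[symmetric]\<close>)
  moreover have "x \<noteq> y" using assms(3) by blast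
  ultimately show ?thesis unfolding flag_lt_def Let_def flag_lt_at_def by simp
qed

lemma flag_lt_irrefl: "\<not> flag_lt S g d x x"
  unfolding flag_lt_def by simp

lemma flag_inter_eq_punct:
  assumes "length x = length y" "j < length x" "x ! j \<noteq> y ! j"
    and "\<And>i. i < length x \<Longrightarrow> i \<noteq> j \<Longrightarrow> x ! i = y ! i"
  shows "flag_inter x y = punct x j" "flag_inter x y = punct y j"
  using assms unfolding flag_inter_def punct_def
  by (auto intro!: nth_equalityI simp: nth_list_update)

section \<open>Local structure of positive opetopic cardinals\<close>

locale pos_cardinal =
  fixes S :: "nat \<Rightarrow> 'a set" and g :: "'a \<Rightarrow> 'a" and d :: "'a \<Rightarrow> 'a set"
  assumes pos_opetopic_cardinal: "pos_opetopic_cardinal S g d"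
begin

lemma finite_faces: "finite (S k)"
  using pos_opetopic_cardinal unfolding pos_opetopic_cardinal_def pos_hypergraph_def by simp

lemma target_face: "a \<in> S (Suc k) \<Longrightarrow> g a \<in> S k"
  using pos_opetopic_cardinal unfolding pos_opetopic_cardinal_def pos_hypergraph_def by simp

lemma source_faces: "a \<in> S (Suc k) \<Longrightarrow> d a \<subseteq> S k"
  using pos_opetopic_cardinal unfolding pos_opetopic_cardinal_def pos_hypergraph_def by simp

lemma edge_single_source: "a \<in> S 1 \<Longrightarrow> \<exists>v. d a = {v}"
  using pos_opetopic_cardinal unfolding pos_opetopic_cardinal_def pos_hypergraph_def by simp

lemma globular_target: "2 \<le> k \<Longrightarrow> a \<in> S k \<Longrightarrow> {g (g a)} = g ` d a - \<Union> (d ` d a)"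
  using pos_opetopic_cardinal unfolding pos_opetopic_cardinal_def by simp

lemma globular_sources: "2 \<le> k \<Longrightarrow> a \<in> S k \<Longrightarrow> d (g a) = \<Union> (d ` d a) - g ` d a"
  using pos_opetopic_cardinal unfolding pos_opetopic_cardinal_def by simp

lemma upper_lt_irrefl: "a \<in> S k \<Longrightarrow> (a, a) \<notin> upper_lt S g d k"
  using pos_opetopic_cardinal unfolding pos_opetopic_cardinal_def by simp

lemma upper_lt_linear_vertices:
  "a \<in> S 0 \<Longrightarrow> b \<in> S 0 \<Longrightarrow> a \<noteq> b \<Longrightarrow> (a, b) \<in> upper_lt S g d 0 \<or> (b, a) \<in> upper_lt S g d 0"
  using pos_opetopic_cardinal unfolding pos_opetopic_cardinal_def perp_def by simp

lemma lower_upper_disjoint: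
  "0 < k \<Longrightarrow> a \<in> S k \<Longrightarrow> b \<in> S k \<Longrightarrow> perp (lower_lt S g d k) a b \<Longrightarrow> \<not> perp (upper_lt S g d k) a b"
  using pos_opetopic_cardinal unfolding pos_opetopic_cardinal_def by simp

lemma upper_lt_common_target:
  "x \<in> S k \<Longrightarrow> a \<in> S (Suc k) \<Longrightarrow> b \<in> S (Suc k) \<Longrightarrow> a \<noteq> b \<Longrightarrow> g a = x \<Longrightarrow> g b = x \<Longrightarrow>
   perp (upper_lt S g d (Suc k)) a b"
  using pos_opetopic_cardinal unfolding pos_opetopic_cardinal_def by simp

lemma upper_lt_common_source:
  "x \<in> S k \<Longrightarrow> a \<in> S (Suc k) \<Longrightarrow> b \<in> S (Suc k) \<Longrightarrow> a \<noteq> b \<Longrightarrow> x \<in> d a \<Longrightarrow> x \<in> d b \<Longrightarrow>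
   perp (upper_lt S g d (Suc k)) a b"
  using pos_opetopic_cardinal unfolding pos_opetopic_cardinal_def by simp

lemma bd_faces: "c \<in> S (Suc k) \<Longrightarrow> v \<in> bd g d c \<Longrightarrow> v \<in> S k"
  unfolding bd_def using target_face source_faces by blast

lemma upper_lt_source_target: "\<alpha> \<in> S (Suc k) \<Longrightarrow> a \<in> d \<alpha> \<Longrightarrow> (a, g \<alpha>) \<in> upper_lt S g d k"
  unfolding upper_lt_def upper_rel_def using source_faces target_face by blast

lemma target_notin_sources: "a \<in> S (Suc k) \<Longrightarrow> g a \<notin> d a"
  using upper_lt_source_target upper_lt_irrefl target_face by blast

lemma upper_lt_trans:
  "(a, b) \<in> upper_lt S g d k \<Longrightarrow> (b, c) \<in> upper_lt S g d k \<Longrightarrow> (a, c) \<in> upper_lt S g d k"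
  unfolding upper_lt_def by (rule trancl_trans)

text \<open>The target map sends a lower chain of (k+1)-faces to an upper chain of their targets.\<close>

lemma lower_lt_irrefl: "a \<in> S (Suc k) \<Longrightarrow> (a, a) \<notin> lower_lt S g d (Suc k)"
proof
  assume a: "a \<in> S (Suc k)" and "(a, a) \<in> lower_lt S g d (Suc k)"
  then have "(a, a) \<in> (lower_rel S g d (Suc k))\<^sup>+" by (simp add: lower_lt_def)
  moreover have "(g b, g c) \<in> (upper_rel S g d k)\<^sup>+" if "(b, c) \<in> (lower_rel S g d (Suc k))\<^sup>+" for b c
    using that
  proof induction
    case (base c)
    then show ?case unfolding lower_rel_def upper_rel_def using target_face by blast
  next
    case (step c e)
    then have "(g c, g e) \<in> upper_rel S g d k"
      unfolding lower_rel_def upper_rel_def using target_face by blast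
    with step.IH show ?case by (rule trancl_into_trancl)
  qed
  ultimately show False using upper_lt_irrefl target_face[OF a] unfolding upper_lt_def by blast
qed

lemma upper_chain:
  assumes "(b1, b2) \<in> (upper_rel S g d j)\<^sup>+"
  obtains \<alpha>1 \<alpha>r where "\<alpha>1 \<in> S (Suc j)" "\<alpha>r \<in> S (Suc j)" "b1 \<in> d \<alpha>1" "g \<alpha>r = b2"
    "\<alpha>1 = \<alpha>r \<or> (\<alpha>1, \<alpha>r) \<in> lower_lt S g d (Suc j)"
proof -
  have "\<exists>\<alpha>1 \<alpha>r. \<alpha>1 \<in> S (Suc j) \<and> \<alpha>r \<in> S (Suc j) \<and> b1 \<in> d \<alpha>1 \<and> g \<alpha>r = b2 \<and>
     (\<alpha>1 = \<alpha>r \<or> (\<alpha>1, \<alpha>r) \<in> lower_lt S g d (Suc j))"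
    using assms
  proof (induction rule: trancl_induct)
    case (base y)
    then show ?case unfolding upper_rel_def by blast
  next
    case (step y z)
    then obtain \<alpha>1 \<alpha>r where h: "\<alpha>1 \<in> S (Suc j)" "\<alpha>r \<in> S (Suc j)" "b1 \<in> d \<alpha>1" "g \<alpha>r = y"
       "\<alpha>1 = \<alpha>r \<or> (\<alpha>1, \<alpha>r) \<in> lower_lt S g d (Suc j)" by blast
    from step(2) obtain \<beta> where \<beta>: "\<beta> \<in> S (Suc j)" "y \<in> d \<beta>" "g \<beta> = z"
      unfolding upper_rel_def by blast
    have "(\<alpha>r, \<beta>) \<in> lower_rel S g d (Suc j)" using h \<beta> unfolding lower_rel_def by blast
    then have "(\<alpha>1, \<beta>) \<in> lower_lt S g d (Suc j)" using h(5) unfolding lower_lt_def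
      by (metis r_into_trancl' trancl_into_trancl)
    then show ?case using h \<beta> by blast
  qed
  then show thesis using that by blast
qed

lemma sources_not_upper_related:
  assumes c: "c \<in> S (Suc j)" and b: "b1 \<in> d c" "b2 \<in> d c"
  shows "(b1, b2) \<notin> upper_lt S g d j"
proof
  assume "(b1, b2) \<in> upper_lt S g d j"
  then obtain \<alpha>1 \<alpha>r where \<alpha>: "\<alpha>1 \<in> S (Suc j)" "\<alpha>r \<in> S (Suc j)" "b1 \<in> d \<alpha>1" "g \<alpha>r = b2"
     "\<alpha>1 = \<alpha>r \<or> (\<alpha>1, \<alpha>r) \<in> lower_lt S g d (Suc j)"
    unfolding upper_lt_def by (rule upper_chain)
  have "(\<alpha>r, c) \<in> lower_rel S g d (Suc j)" using \<alpha> c b unfolding lower_rel_def by blast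
  then have lower: "(\<alpha>1, c) \<in> lower_lt S g d (Suc j)" using \<alpha>(5) unfolding lower_lt_def
    by (metis r_into_trancl' trancl_into_trancl)
  show False
  proof (cases "\<alpha>1 = c")
    case True
    then show ?thesis using lower lower_lt_irrefl c by blast
  next
    case False
    have "b1 \<in> S j" using source_faces c b by blast
    then have "perp (upper_lt S g d (Suc j)) \<alpha>1 c"
      using upper_lt_common_source \<alpha>(1,3) c b(1) False by blast
    moreover have "perp (lower_lt S g d (Suc j)) \<alpha>1 c" using lower unfolding perp_def by blast
    ultimately show False using lower_upper_disjoint \<alpha>(1) c by blast
  qed
qed

lemma sources_no_common_face:
  assumes c: "c \<in> S (Suc (Suc j))" and b: "b1 \<in> d c" "b2 \<in> d c" and u: "u \<in> S j"
    and common: "(g b1 = u \<and> g b2 = u) \<or> (u \<in> d b1 \<and> u \<in> d b2)"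
  shows "b1 = b2"
proof (rule ccontr)
  assume "b1 \<noteq> b2"
  moreover have "b1 \<in> S (Suc j)" "b2 \<in> S (Suc j)" using source_faces c b by blast+
  ultimately have "perp (upper_lt S g d (Suc j)) b1 b2"
    using common upper_lt_common_target[OF u] upper_lt_common_source[OF u] by blast
  then show False unfolding perp_def using sources_not_upper_related[OF c] b by blast
qed

lemma globular_target_iff:
  "c \<in> S (Suc (Suc j)) \<Longrightarrow> u = g (g c) \<longleftrightarrow> (\<exists>x\<in>d c. g x = u) \<and> \<not> (\<exists>x\<in>d c. u \<in> d x)"
  using globular_target[of "Suc (Suc j)" c] by (auto simp: set_eq_iff)

lemma globular_sources_iff:
  "c \<in> S (Suc (Suc j)) \<Longrightarrow> u \<in> d (g c) \<longleftrightarrow> (\<exists>x\<in>d c. u \<in> d x) \<and> \<not> (\<exists>x\<in>d c. g x = u)"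
  using globular_sources[of "Suc (Suc j)" c] by auto

lemma faces_through_vertex:
  assumes c: "c \<in> S (Suc (Suc j))" and u: "u \<in> S j"
  shows "\<And>x y. x \<in> d c \<Longrightarrow> y \<in> d c \<Longrightarrow> g x = u \<Longrightarrow> g y = u \<Longrightarrow> x = y"
    and "\<And>x y. x \<in> d c \<Longrightarrow> y \<in> d c \<Longrightarrow> u \<in> d x \<Longrightarrow> u \<in> d y \<Longrightarrow> x = y"
    and "\<And>x. u = g (g c) \<Longrightarrow> x \<in> d c \<Longrightarrow> u \<notin> d x"
    and "\<And>x. u \<in> d (g c) \<Longrightarrow> x \<in> d c \<Longrightarrow> g x \<noteq> u"
    and "u = g (g c) \<Longrightarrow> \<exists>x\<in>d c. g x = u"
    and "u \<in> d (g c) \<Longrightarrow> \<exists>x\<in>d c. u \<in> d x"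
    and "\<And>x. x \<in> d c \<Longrightarrow> g x = u \<Longrightarrow> \<not> (\<exists>y\<in>d c. u \<in> d y) \<Longrightarrow> u = g (g c)"
    and "\<And>x. x \<in> d c \<Longrightarrow> u \<in> d x \<Longrightarrow> \<not> (\<exists>y\<in>d c. g y = u) \<Longrightarrow> u \<in> d (g c)"
  using sources_no_common_face[OF c _ _ u] globular_target_iff[OF c, of u]
    globular_sources_iff[OF c, of u] by blast+

lemma no_three_faces_through:
  assumes c: "c \<in> S (Suc (Suc j))"
    and faces: "a \<in> bd g d c" "b1 \<in> bd g d c" "b2 \<in> bd g d c"
    and through: "u \<in> bd g d a" "u \<in> bd g d b1" "u \<in> bd g d b2"
    and distinct: "a \<noteq> b1" "a \<noteq> b2" "b1 \<noteq> b2"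
  shows False
proof -
  have "u \<in> S j" using bd_faces c faces(1) through(1) by blast
  note F = faces_through_vertex[OF c this]
  show False using faces through distinct unfolding bd_def
    by (elim insertE) (metis F(1-4))+
qed

lemma ex_partner_face:
  assumes c: "c \<in> S (Suc (Suc j))" and a: "a \<in> bd g d c" "u \<in> bd g d a"
  shows "\<exists>b. b \<in> bd g d c \<and> b \<noteq> a \<and> u \<in> bd g d b"
proof -
  have aS: "a \<in> S (Suc j)" using bd_faces c a by blast
  then have "u \<in> S j" using bd_faces a by blast
  note F = faces_through_vertex[OF c this]
  have gc: "g c \<notin> d c" and ga: "g a \<notin> d a"
    using target_notin_sources c aS by blast+
  show ?thesis
  proof (cases "a = g c")
    case True
    show ?thesis
    proof (cases "u = g a")
      case True2: True
      then obtain x where "x \<in> d c" "g x = u" using F(5) True by blast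
      then show ?thesis using gc True unfolding bd_def by blast
    next
      case False
      then have "u \<in> d (g c)" using a True unfolding bd_def by blast
      then obtain x where "x \<in> d c" "u \<in> d x" using F(6) by blast
      then show ?thesis using gc True unfolding bd_def by blast
    qed
  next
    case False
    then have ad: "a \<in> d c" using a unfolding bd_def by blast
    show ?thesis
    proof (cases "u = g a")
      case True
      show ?thesis
      proof (cases "\<exists>y\<in>d c. u \<in> d y")
        case True2: True
        then obtain y where "y \<in> d c" "u \<in> d y" by blast
        then show ?thesis using True ga unfolding bd_def by blast
      next
        case False
        then have "u = g (g c)" using F(7)[OF ad] True by blast
        then show ?thesis using gc ad unfolding bd_def by blast
      qed
    next
      case False
      then have ud: "u \<in> d a" using a unfolding bd_def by blast
      show ?thesis
      proof (cases "\<exists>y\<in>d c. g y = u")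
        case True2: True
        then obtain y where "y \<in> d c" "g y = u" by blast
        then show ?thesis using ud ga unfolding bd_def by blast
      next
        case False
        then have "u \<in> d (g c)" using F(8)[OF ad ud] by blast
        then show ?thesis using gc ad unfolding bd_def by blast
      qed
    qed
  qed
qed

lemma diamond:
  assumes c: "c \<in> S (Suc (Suc j))" and a: "a \<in> bd g d c" "u \<in> bd g d a"
  shows "\<exists>!b. b \<in> bd g d c \<and> b \<noteq> a \<and> u \<in> bd g d b"
proof -
  have "b1 = b2" if "b1 \<in> bd g d c" "b1 \<noteq> a" "u \<in> bd g d b1"
    and "b2 \<in> bd g d c" "b2 \<noteq> a" "u \<in> bd g d b2" for b1 b2
    using no_three_faces_through[OF c a(1) that(1,4) a(2) that(3,6)] that(2,5) by blast
  then show ?thesis using ex_partner_face[OF c a] by blast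
qed

lemma partner_face_types:
  assumes c: "c \<in> S (Suc (Suc j))" and a: "a \<in> bd g d c" "u \<in> bd g d a"
    and b: "b \<in> bd g d c" "u \<in> bd g d b" and ne: "b \<noteq> a"
  shows "a = g c \<and> b \<in> d c \<and> (u = g a \<longleftrightarrow> u = g b) \<or>
         b = g c \<and> a \<in> d c \<and> (u = g a \<longleftrightarrow> u = g b) \<or>
         a \<in> d c \<and> b \<in> d c \<and> (u = g a \<longleftrightarrow> u \<in> d b)"
proof -
  have "a \<in> S (Suc j)" using bd_faces c a by blast
  then have "u \<in> S j" using bd_faces a by blast
  note F = faces_through_vertex[OF c this]
  have gc: "g c \<notin> d c" using target_notin_sources c by blast
  have ua: "u = g a \<or> u \<in> d a" and ub: "u = g b \<or> u \<in> d b" using a b unfolding bd_def by blast+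
  consider "a = g c" "b \<in> d c" | "b = g c" "a \<in> d c" | "a \<in> d c" "b \<in> d c"
    using a b ne unfolding bd_def by blast
  then show ?thesis
  proof cases
    case 1
    have "u = g b" if "u = g a" using F(3)[OF _ 1(2)] that 1(1) ub by metis
    moreover have "u = g a" if "u = g b" using F(4)[OF _ 1(2)] that 1(1) ua by metis
    ultimately show ?thesis using 1 by blast
  next
    case 2
    have "u = g a" if "u = g b" using F(3)[OF _ 2(2)] that 2(1) ua by metis
    moreover have "u = g b" if "u = g a" using F(4)[OF _ 2(2)] that 2(1) ub by metis
    ultimately show ?thesis using 2 by blast
  next
    case 3
    have "u \<in> d b" if "u = g a" using F(1)[OF 3] that ne ub by metis
    moreover have "u = g a" if "u \<in> d b" using F(2)[OF 3] that ne ua by metis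
    ultimately show ?thesis using 3 by blast
  qed
qed

text \<open>\<^term>\<open>positive_corner c a u\<close> says that the sign of the flag fragment [c, a, u] is +1.\<close>

definition positive_corner :: "'a \<Rightarrow> 'a \<Rightarrow> 'a \<Rightarrow> bool" where
  "positive_corner c a u \<longleftrightarrow> (u = g a \<longleftrightarrow> a = g c)"

lemma positive_corner_partner:
  assumes c: "c \<in> S (Suc (Suc j))" and a: "a \<in> bd g d c" "u \<in> bd g d a"
    and b: "b \<in> bd g d c" "u \<in> bd g d b" and ne: "b \<noteq> a"
  shows "positive_corner c b u \<longleftrightarrow> \<not> positive_corner c a u"
    and "positive_corner c a u \<Longrightarrow> prec S g d (Suc j) u a b"
    and "\<not> positive_corner c a u \<Longrightarrow> prec S g d (Suc j) u b a"
proof -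
  have "g c \<notin> d c" "g a \<notin> d a" "g b \<notin> d b" using target_notin_sources bd_faces c a b by blast+
  moreover have "u = g a \<or> u \<in> d a" "u = g b \<or> u \<in> d b" using a b unfolding bd_def by blast+
  moreover have "a \<in> d c \<Longrightarrow> (a, g c) \<in> upper_lt S g d (Suc j)"
    and "b \<in> d c \<Longrightarrow> (b, g c) \<in> upper_lt S g d (Suc j)" using upper_lt_source_target c by blast+
  moreover note partner_face_types[OF assms]
  ultimately show "positive_corner c b u \<longleftrightarrow> \<not> positive_corner c a u"
    and "positive_corner c a u \<Longrightarrow> prec S g d (Suc j) u a b"
    and "\<not> positive_corner c a u \<Longrightarrow> prec S g d (Suc j) u b a"
    unfolding positive_corner_def prec_def by auto
qed

lemma edge_partner:
  assumes c: "c \<in> S 1" and a: "a \<in> bd g d c"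
  shows "\<exists>!b. b \<in> bd g d c \<and> b \<noteq> a"
proof -
  obtain v where "d c = {v}" using edge_single_source c by blast
  moreover have "g c \<notin> d c" using target_notin_sources c by simp
  ultimately show ?thesis using a unfolding bd_def by auto
qed

lemma edge_boundary_order:
  assumes c: "c \<in> S 1" and ab: "a \<in> bd g d c" "b \<in> bd g d c" "a \<noteq> b"
  shows "a = g c \<longleftrightarrow> b \<noteq> g c" and "a = g c \<Longrightarrow> (b, a) \<in> upper_lt S g d 0"
proof -
  obtain v where v: "d c = {v}" using edge_single_source c by blast
  moreover have "g c \<notin> d c" using target_notin_sources c by simp
  moreover have "(v, g c) \<in> upper_lt S g d 0" using upper_lt_source_target[of c 0 v] c v by simp
  ultimately show "a = g c \<longleftrightarrow> b \<noteq> g c" and "a = g c \<Longrightarrow> (b, a) \<in> upper_lt S g d 0"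
    using ab unfolding bd_def by auto
qed

lemma prec_irrefl: "a \<in> S (Suc j) \<Longrightarrow> \<not> prec S g d (Suc j) u a a"
  unfolding prec_def using target_notin_sources upper_lt_irrefl by blast

lemma prec_trans:
  assumes b: "b \<in> S (Suc j)" and ab: "prec S g d (Suc j) u a b" and bc: "prec S g d (Suc j) u b c"
  shows "prec S g d (Suc j) u a c"
proof -
  have "g b \<notin> d b" using target_notin_sources b by blast
  moreover have "(a, b) \<in> upper_lt S g d (Suc j) \<Longrightarrow> (b, c) \<in> upper_lt S g d (Suc j) \<Longrightarrow>
      (a, c) \<in> upper_lt S g d (Suc j)"
    and "(c, b) \<in> upper_lt S g d (Suc j) \<Longrightarrow> (b, a) \<in> upper_lt S g d (Suc j) \<Longrightarrow>
      (c, a) \<in> upper_lt S g d (Suc j)"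
    by (rule upper_lt_trans; assumption)+
  ultimately show ?thesis using ab bc unfolding prec_def by (elim disjE conjE) auto
qed

lemma prec_total:
  assumes ab: "a \<in> S (Suc j)" "b \<in> S (Suc j)" "a \<noteq> b"
    and u: "u \<in> S j" "u \<in> bd g d a" "u \<in> bd g d b"
  shows "prec S g d (Suc j) u a b \<or> prec S g d (Suc j) u b a"
proof -
  have "g a \<notin> d a" "g b \<notin> d b" using target_notin_sources ab by blast+
  consider "g a = u" "g b = u" | "g a = u" "u \<in> d b" | "u \<in> d a" "g b = u" | "u \<in> d a" "u \<in> d b"
    using u unfolding bd_def by (metis insertE)
  then show ?thesis
  proof cases
    case 1
    then show ?thesis using upper_lt_common_target[OF u(1) ab] unfolding prec_def perp_def by blast
  next
    case 2
    then show ?thesis unfolding prec_def by blast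
  next
    case 3
    then show ?thesis unfolding prec_def by blast
  next
    case 4
    then show ?thesis using upper_lt_common_source[OF u(1) ab] unfolding prec_def perp_def by blast
  qed
qed

end

section \<open>The order on maximal flags\<close>

locale pos_cardinal_flags = pos_cardinal +
  fixes n :: nat
  assumes dim_pos: "0 < n"
begin

abbreviation flag :: "'a list \<Rightarrow> bool" where
  "flag \<equiv> max_flag S g d n"

lemma flag_length: "flag y \<Longrightarrow> length y = Suc n"
  and flag_face: "flag y \<Longrightarrow> i \<le> n \<Longrightarrow> y ! i \<in> S i"
  and flag_bd: "flag y \<Longrightarrow> i < n \<Longrightarrow> y ! i \<in> bd g d (y ! Suc i)"
  and flag_top: "flag y \<Longrightarrow> y ! n = the_elem (S n)"
  unfolding max_flag_def by auto

lemma finite_flags: "finite {y. flag y}"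
proof (rule finite_subset)
  show "finite {xs. set xs \<subseteq> (\<Union>k\<le>n. S k) \<and> length xs = Suc n}"
    by (rule finite_lists_length_eq) (simp add: finite_faces)
  have "set y \<subseteq> (\<Union>k\<le>n. S k)" if "flag y" for y
  proof
    fix v assume "v \<in> set y"
    then obtain i where "i < length y" "y ! i = v" by (metis in_set_conv_nth)
    then show "v \<in> (\<Union>k\<le>n. S k)" using flag_face[OF that, of i] flag_length[OF that] by auto
  qed
  then show "{y. flag y} \<subseteq> {xs. set xs \<subseteq> (\<Union>k\<le>n. S k) \<and> length xs = Suc n}"
    using flag_length by blast
qed

lemma flag_lt_at_trans:
  assumes y: "flag y" and k: "k \<le> n"
    and agree: "\<And>i. i < k \<Longrightarrow> x ! i = y ! i" "\<And>i. i < k \<Longrightarrow> y ! i = z ! i"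
    and xy: "flag_lt_at S g d x y k" and yz: "flag_lt_at S g d y z k"
  shows "flag_lt_at S g d x z k"
proof (cases k)
  case 0
  then show ?thesis using xy yz upper_lt_trans unfolding flag_lt_at_def by auto
next
  case (Suc j)
  have sgn: "sgnto g x j = sgnto g y j" using agree Suc by (intro sgnto_cong) auto
  have u: "x ! j = y ! j" using agree Suc by simp
  have yS: "y ! Suc j \<in> S (Suc j)" using flag_face[OF y] k Suc by simp
  consider (pos) "sgnto g x j = 1" | (neg) "sgnto g x j = -1" using sgnto_eq_1_or_minus_1 by blast
  then show ?thesis
  proof cases
    case pos
    then have "prec S g d (Suc j) (x ! j) (x ! Suc j) (y ! Suc j)"
      "prec S g d (Suc j) (x ! j) (y ! Suc j) (z ! Suc j)"
      using xy yz sgn u unfolding flag_lt_at_def Suc by auto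
    then show ?thesis using pos prec_trans[OF yS] unfolding flag_lt_at_def Suc by simp
  next
    case neg
    then have "prec S g d (Suc j) (x ! j) (y ! Suc j) (x ! Suc j)"
      "prec S g d (Suc j) (x ! j) (z ! Suc j) (y ! Suc j)"
      using xy yz sgn u unfolding flag_lt_at_def Suc by auto
    then show ?thesis using neg prec_trans[OF yS] unfolding flag_lt_at_def Suc by simp
  qed
qed

lemma flag_lt_at_irrefl:
  assumes "flag x" "k \<le> n" "x ! k = y ! k"
  shows "\<not> flag_lt_at S g d x y k"
proof (cases k)
  case 0
  then show ?thesis using assms upper_lt_irrefl flag_face[OF assms(1), of 0] unfolding flag_lt_at_def by auto
next
  case (Suc j)
  then show ?thesis using assms prec_irrefl flag_face[OF assms(1), of k] unfolding flag_lt_at_def by auto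
qed

lemma flag_lt_trans:
  assumes x: "flag x" and y: "flag y" and z: "flag z"
    and xy: "flag_lt S g d x y" and yz: "flag_lt S g d y z"
  shows "flag_lt S g d x z"
proof -
  have len: "length x = Suc n" "length y = Suc n" "length z = Suc n"
    using flag_length x y z by auto
  have "x \<noteq> y" "y \<noteq> z" using xy yz flag_lt_irrefl by auto
  obtain k1 where k1: "k1 < Suc n" "\<And>i. i < k1 \<Longrightarrow> x ! i = y ! i" "x ! k1 \<noteq> y ! k1"
    using first_difference[of x y] len \<open>x \<noteq> y\<close> by auto
  obtain k2 where k2: "k2 < Suc n" "\<And>i. i < k2 \<Longrightarrow> y ! i = z ! i" "y ! k2 \<noteq> z ! k2"
    using first_difference[of y z] len \<open>y \<noteq> z\<close> by auto
  have at1: "flag_lt_at S g d x y k1" using xy flag_lt_iff_flag_lt_at[of k1 x y] k1 len by simp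
  have at2: "flag_lt_at S g d y z k2" using yz flag_lt_iff_flag_lt_at[of k2 y z] k2 len by simp
  consider "k1 < k2" | "k2 < k1" | "k1 = k2" by arith
  then show ?thesis
  proof cases
    case 1
    then have "flag_lt_at S g d x z k1" using at1 k2 unfolding flag_lt_at_def by auto
    then show ?thesis using flag_lt_iff_flag_lt_at[of k1 x z] k1 k2 1 len by auto
  next
    case 2
    then have "0 < k2 \<Longrightarrow> sgnto g x (k2 - 1) = sgnto g y (k2 - 1)" using k1 by (intro sgnto_cong) auto
    then have "flag_lt_at S g d x z k2" using at2 k1 2 unfolding flag_lt_at_def by auto
    then show ?thesis using flag_lt_iff_flag_lt_at[of k2 x z] k1 k2 2 len by auto
  next
    case 3
    then have "flag_lt_at S g d x z k1" using flag_lt_at_trans[OF y _ _ _ at1] at2 k1 k2 by auto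
    moreover from this have "x ! k1 \<noteq> z ! k1" using flag_lt_at_irrefl[OF x] k1 by auto
    ultimately show ?thesis using flag_lt_iff_flag_lt_at[of k1 x z] k1 k2 3 len by auto
  qed
qed

lemma flag_lt_total:
  assumes x: "flag x" and y: "flag y" and ne: "x \<noteq> y"
  shows "flag_lt S g d x y \<or> flag_lt S g d y x"
proof -
  have len: "length x = Suc n" "length y = Suc n" using flag_length x y by auto
  obtain k where k: "k < Suc n" "\<And>i. i < k \<Longrightarrow> x ! i = y ! i" "x ! k \<noteq> y ! k"
    using first_difference[of x y] len ne by auto
  have "flag_lt_at S g d x y k \<or> flag_lt_at S g d y x k"
  proof (cases k)
    case 0
    then show ?thesis using upper_lt_linear_vertices flag_face[OF x, of 0] flag_face[OF y, of 0] k
      unfolding flag_lt_at_def by auto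
  next
    case (Suc j)
    have "sgnto g x j = sgnto g y j" using k Suc by (intro sgnto_cong) auto
    moreover have u: "x ! j = y ! j" using k Suc by simp
    moreover have "prec S g d (Suc j) (x ! j) (x ! Suc j) (y ! Suc j) \<or>
        prec S g d (Suc j) (x ! j) (y ! Suc j) (x ! Suc j)"
      using prec_total flag_face[OF x] flag_face[OF y] flag_bd[OF x, of j] flag_bd[OF y, of j]
        u k Suc by simp
    ultimately show ?thesis using sgnto_eq_1_or_minus_1[of g x j] unfolding flag_lt_at_def Suc by auto
  qed
  then show ?thesis
    using flag_lt_iff_flag_lt_at[of k x y] flag_lt_iff_flag_lt_at[of k y x] k len by auto
qed

section \<open>Partners and the successor of a maximal flag\<close>

definition flag_partner :: "'a list \<Rightarrow> nat \<Rightarrow> 'a \<Rightarrow> bool" where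
  "flag_partner y j b \<longleftrightarrow> b \<in> bd g d (y ! Suc j) \<and> b \<noteq> y ! j \<and> (j = 0 \<or> y ! (j - 1) \<in> bd g d b)"

definition partner :: "'a list \<Rightarrow> nat \<Rightarrow> 'a" where
  "partner y j = (THE b. flag_partner y j b)"

lemma ex1_flag_partner:
  assumes y: "flag y" and j: "j < n"
  shows "\<exists>!b. flag_partner y j b"
proof (cases j)
  case 0
  have "y ! 1 \<in> S 1" "y ! 0 \<in> bd g d (y ! 1)" using flag_face[OF y, of 1] flag_bd[OF y, of 0] j 0 by auto
  then show ?thesis using edge_partner 0 unfolding flag_partner_def by simp
next
  case (Suc i)
  have "y ! Suc (Suc i) \<in> S (Suc (Suc i))" "y ! Suc i \<in> bd g d (y ! Suc (Suc i))"
    "y ! i \<in> bd g d (y ! Suc i)"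
    using flag_face[OF y, of "Suc (Suc i)"] flag_bd[OF y] j Suc by auto
  then show ?thesis using diamond Suc unfolding flag_partner_def by simp
qed

lemma flag_partner_partner: "flag y \<Longrightarrow> j < n \<Longrightarrow> flag_partner y j (partner y j)"
  unfolding partner_def by (rule theI') (rule ex1_flag_partner)

lemma flag_swap:
  assumes y: "flag y" and j: "j < n" and b: "flag_partner y j b"
  shows "flag (y[j := b])"
  unfolding max_flag_def
proof (intro conjI allI impI)
  have "b \<in> S j" using b bd_faces flag_face[OF y, of "Suc j"] j unfolding flag_partner_def by auto
  then show "i \<le> n \<Longrightarrow> y[j := b] ! i \<in> S i" for i using flag_face[OF y] flag_length[OF y]
    by (cases "i = j") auto
  show "i < n \<Longrightarrow> y[j := b] ! i \<in> bd g d (y[j := b] ! Suc i)" for i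
    using b flag_bd[OF y, of i] flag_length[OF y] j unfolding flag_partner_def
    by (cases "i = j"; cases "Suc i = j") auto
qed (use flag_length[OF y] flag_top[OF y] j in auto)

lemma flag_partner_swap_back:
  assumes y: "flag y" and j: "j < n" and b: "flag_partner y j b"
  shows "flag_partner (y[j := b]) j (y ! j)"
  using b flag_bd[OF y, of j] flag_bd[OF y, of "j - 1"] flag_length[OF y] j
  unfolding flag_partner_def by (cases j) auto

lemma sgnto_Suc_Suc:
  "sgnto g y (Suc (Suc i)) =
     (if positive_corner (y ! Suc (Suc i)) (y ! Suc i) (y ! i) then 1 else -1) * sgnto g y i"
  unfolding positive_corner_def by auto

lemma sgnto_swap:
  assumes y: "flag y" and j: "j < n" and b: "flag_partner y j b" and k: "Suc j \<le> k"
  shows "sgnto g (y[j := b]) k = - sgnto g y k"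
  using k
proof (induction k rule: dec_induct)
  case base
  show ?case
  proof (cases j)
    case 0
    have "y ! 1 \<in> S 1" "y ! 0 \<in> bd g d (y ! 1)" "b \<in> bd g d (y ! 1)" "y ! 0 \<noteq> b"
      using flag_face[OF y, of 1] flag_bd[OF y, of 0] b j 0 unfolding flag_partner_def by auto
    then have "y ! 0 = g (y ! 1) \<longleftrightarrow> b \<noteq> g (y ! 1)" by (rule edge_boundary_order)
    then show ?thesis using 0 flag_length[OF y] j by auto
  next
    case (Suc i)
    have "y ! Suc (Suc i) \<in> S (Suc (Suc i))" "y ! Suc i \<in> bd g d (y ! Suc (Suc i))"
      "y ! i \<in> bd g d (y ! Suc i)"
      using flag_face[OF y, of "Suc (Suc i)"] flag_bd[OF y] j Suc by auto
    moreover have "b \<in> bd g d (y ! Suc (Suc i))" "y ! i \<in> bd g d b" "b \<noteq> y ! Suc i"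
      using b Suc unfolding flag_partner_def by auto
    ultimately have "positive_corner (y ! Suc (Suc i)) b (y ! i) \<longleftrightarrow>
        \<not> positive_corner (y ! Suc (Suc i)) (y ! Suc i) (y ! i)"
      by (rule positive_corner_partner(1))
    moreover have "sgnto g (y[Suc i := b]) i = sgnto g y i" by (rule sgnto_cong) auto
    ultimately show ?thesis
      using sgnto_Suc_Suc[of y i] sgnto_Suc_Suc[of "y[Suc i := b]" i] flag_length[OF y] j Suc by auto
  qed
next
  case (step m)
  then show ?case by auto
qed

lemma finite_ll_set: "finite (ll_set d n y)"
  unfolding ll_set_def by (rule finite_subset[of _ "{..<n - 1}"]) auto

text \<open>Above the last source step \<^term>\<open>Max (ll_set d n y)\<close> every step of the flag is a target
  step, which leaves the sign unchanged.\<close>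

lemma sgnto_top_ll_set:
  assumes y: "flag y" and ne: "ll_set d n y \<noteq> {}"
  shows "sgnto g y n = - sgnto g y (Suc (Max (ll_set d n y)))"
proof -
  define l where "l = Max (ll_set d n y)"
  have "l \<in> ll_set d n y" using Max_in[OF finite_ll_set ne] l_def by simp
  then have l: "l < n - 1" "y ! Suc l \<in> d (y ! Suc (Suc l))" unfolding ll_set_def by auto
  have above: "i \<notin> ll_set d n y" if "l < i" for i
    using Max_ge[OF finite_ll_set, of i y] that l_def by auto
  have "sgnto g y k = - sgnto g y (Suc l)" if "Suc (Suc l) \<le> k" "k \<le> n" for k
    using that
  proof (induction k rule: dec_induct)
    case base
    have "y ! Suc (Suc l) \<in> S (Suc (Suc l))" using flag_face[OF y] l by simp
    then have "y ! Suc l \<noteq> g (y ! Suc (Suc l))" using target_notin_sources l(2) by metis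
    then show ?case by simp
  next
    case (step k)
    have "k - 1 \<notin> ll_set d n y" using above[of "k - 1"] step.hyps by simp
    then have "y ! k \<notin> d (y ! Suc k)" using step unfolding ll_set_def by auto
    then have "y ! k = g (y ! Suc k)" using flag_bd[OF y, of k] step unfolding bd_def by auto
    then show ?case using step by simp
  qed
  then show ?thesis using l l_def by simp
qed

definition swap_level :: "'a list \<Rightarrow> nat" where
  "swap_level y = (if sgnto g y n = 1 then n - 1 else Max (ll_set d n y))"

definition flag_succ :: "'a list \<Rightarrow> 'a list" where
  "flag_succ y = y[swap_level y := partner y (swap_level y)]"

definition has_flag_succ :: "'a list \<Rightarrow> bool" where
  "has_flag_succ y \<longleftrightarrow> flag y \<and> (sgnto g y n = 1 \<or> ll_set d n y \<noteq> {})"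

lemma swap_level_less:
  assumes "has_flag_succ y"
  shows "swap_level y < n"
proof (cases "sgnto g y n = 1")
  case True
  then show ?thesis using dim_pos unfolding swap_level_def by simp
next
  case False
  then have "Max (ll_set d n y) \<in> ll_set d n y"
    using assms Max_in[OF finite_ll_set] unfolding has_flag_succ_def by simp
  then show ?thesis using False unfolding swap_level_def ll_set_def by auto
qed

lemma sgnto_Suc_swap_level:
  assumes "has_flag_succ y"
  shows "sgnto g y (Suc (swap_level y)) = 1"
proof (cases "sgnto g y n = 1")
  case True
  then show ?thesis using dim_pos unfolding swap_level_def by simp
next
  case False
  then have "sgnto g y n = -1" using sgnto_eq_1_or_minus_1 by metis
  then show ?thesis using sgnto_top_ll_set assms False unfolding has_flag_succ_def swap_level_def by simp
qed

lemma flag_partner_swap_level: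
  "has_flag_succ y \<Longrightarrow> flag_partner y (swap_level y) (partner y (swap_level y))"
  using flag_partner_partner swap_level_less unfolding has_flag_succ_def by blast

lemma flag_flag_succ: "has_flag_succ y \<Longrightarrow> flag (flag_succ y)"
  unfolding flag_succ_def using flag_swap flag_partner_swap_level swap_level_less
  unfolding has_flag_succ_def by blast

lemma sgnto_flag_succ: "has_flag_succ y \<Longrightarrow> sgnto g (flag_succ y) n = - sgnto g y n"
  unfolding flag_succ_def using sgnto_swap flag_partner_swap_level swap_level_less
  unfolding has_flag_succ_def by (metis Suc_leI)

lemma flag_lt_flag_succ:
  assumes succ: "has_flag_succ y"
  shows "flag_lt S g d y (flag_succ y)"
proof -
  define j where "j = swap_level y"
  define b where "b = partner y j"
  have y: "flag y" using succ unfolding has_flag_succ_def by simp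
  have j: "j < n" using swap_level_less[OF succ] j_def by simp
  have b: "flag_partner y j b" using flag_partner_swap_level[OF succ] j_def b_def by simp
  have sgn: "sgnto g y (Suc j) = 1" using sgnto_Suc_swap_level[OF succ] j_def by simp
  have "flag_lt_at S g d y (y[j := b]) j"
  proof (cases j)
    case 0
    have "y ! 1 \<in> S 1" "y ! 0 \<in> bd g d (y ! 1)" "b \<in> bd g d (y ! 1)" "y ! 0 \<noteq> b"
      using flag_face[OF y, of 1] flag_bd[OF y, of 0] b j 0 unfolding flag_partner_def by auto
    moreover have "y ! 0 = g (y ! 1)" using sgn 0 by (auto split: if_splits)
    ultimately have "(b, y ! 0) \<in> upper_lt S g d 0" by (rule edge_boundary_order(2))
    then show ?thesis using 0 flag_length[OF y] unfolding flag_lt_at_def by simp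
  next
    case (Suc i)
    have c: "y ! Suc (Suc i) \<in> S (Suc (Suc i))" "y ! Suc i \<in> bd g d (y ! Suc (Suc i))"
      "y ! i \<in> bd g d (y ! Suc i)"
      using flag_face[OF y, of "Suc (Suc i)"] flag_bd[OF y] j Suc by auto
    have "b \<in> bd g d (y ! Suc (Suc i))" "y ! i \<in> bd g d b" "b \<noteq> y ! Suc i"
      using b Suc unfolding flag_partner_def by auto
    note order = positive_corner_partner(2,3)[OF c this]
    have "y[j := b] ! Suc i = b" using flag_length[OF y] j Suc by simp
    then show ?thesis using order sgn sgnto_Suc_Suc[of y i] sgnto_eq_1_or_minus_1[of g y i]
      unfolding flag_lt_at_def Suc by (auto split: if_splits)
  qed
  then show ?thesis
    using flag_lt_iff_flag_lt_at[of j y "y[j := b]"] flag_length[OF y] j b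
    unfolding flag_succ_def j_def b_def flag_partner_def by auto
qed

lemma ll_set_flag_succ:
  assumes succ: "has_flag_succ y" and neg: "sgnto g y n \<noteq> 1"
  shows "ll_set d n (flag_succ y) \<noteq> {}" and "Max (ll_set d n (flag_succ y)) = swap_level y"
proof -
  define l where "l = Max (ll_set d n y)"
  have ne: "ll_set d n y \<noteq> {}" using succ neg unfolding has_flag_succ_def by simp
  have level: "swap_level y = l" using neg unfolding swap_level_def l_def by simp
  have "l \<in> ll_set d n y" using Max_in[OF finite_ll_set ne] l_def by simp
  moreover have "\<And>i. l \<le> i \<Longrightarrow> i \<in> ll_set d n (flag_succ y) \<longleftrightarrow> i \<in> ll_set d n y"
    unfolding flag_succ_def level ll_set_def by auto
  moreover have "\<And>i. i \<in> ll_set d n y \<Longrightarrow> i \<le> l" using Max_ge[OF finite_ll_set] l_def by simp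
  ultimately have "l \<in> ll_set d n (flag_succ y)" "\<And>i. i \<in> ll_set d n (flag_succ y) \<Longrightarrow> i \<le> l"
    by (auto, metis nat_le_linear)
  then show "ll_set d n (flag_succ y) \<noteq> {}" "Max (ll_set d n (flag_succ y)) = swap_level y"
    using Max_eqI[OF finite_ll_set] level by auto
qed

lemma inj_on_flag_succ: "inj_on flag_succ {y. has_flag_succ y}"
proof (rule inj_onI)
  fix y z assume "y \<in> {y. has_flag_succ y}" "z \<in> {y. has_flag_succ y}" and eq: "flag_succ y = flag_succ z"
  then have sy: "has_flag_succ y" and sz: "has_flag_succ z" by simp_all
  then have y: "flag y" and z: "flag z" unfolding has_flag_succ_def by simp_all
  have "sgnto g y n = sgnto g z n" using sgnto_flag_succ[OF sy] sgnto_flag_succ[OF sz] eq by simp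
  then have level: "swap_level y = swap_level z"
    using ll_set_flag_succ[OF sy] ll_set_flag_succ[OF sz] eq unfolding swap_level_def by metis
  define j where "j = swap_level y"
  define w where "w = flag_succ y"
  have j: "j < n" using swap_level_less[OF sy] j_def by simp
  have wy: "w = y[j := partner y j]" unfolding w_def flag_succ_def j_def ..
  have wz: "w = z[j := partner z j]" using eq level unfolding w_def flag_succ_def j_def by simp
  have py: "flag_partner y j (partner y j)" and pz: "flag_partner z j (partner z j)"
    using flag_partner_swap_level[OF sy] flag_partner_swap_level[OF sz] level j_def by simp_all
  have "flag_partner w j (y ! j)" using flag_partner_swap_back[OF y j py] wy by simp
  moreover have "flag_partner w j (z ! j)" using flag_partner_swap_back[OF z j pz] wz by simp
  ultimately have "y ! j = z ! j" using ex1_flag_partner[OF flag_flag_succ[OF sy] j] w_def by blast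
  then show "y = z" using wy wz by (metis list_update_id list_update_overwrite)
qed

lemma no_flag_succ_targets:
  assumes y: "flag y" and no_succ: "\<not> has_flag_succ y" and i: "0 < i" "i < n"
  shows "y ! i = g (y ! Suc i)"
proof -
  have "i - 1 \<notin> ll_set d n y" using no_succ y unfolding has_flag_succ_def by simp
  then have "y ! i \<notin> d (y ! Suc i)" using i unfolding ll_set_def by simp
  then show ?thesis using flag_bd[OF y, of i] i unfolding bd_def by blast
qed

lemma no_flag_succ_bottom:
  assumes y: "flag y" and no_succ: "\<not> has_flag_succ y"
  shows "y ! 0 \<noteq> g (y ! 1)"
proof -
  have "sgnto g y k = sgnto g y 1" if "1 \<le> k" "k \<le> n" for k
    using that
  proof (induction k rule: dec_induct)
    case (step k)
    then show ?case using no_flag_succ_targets[OF y no_succ, of k] by simp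
  qed simp
  then have "sgnto g y 1 = sgnto g y n" using dim_pos by simp
  also have "\<dots> \<noteq> 1" using y no_succ unfolding has_flag_succ_def by simp
  finally show ?thesis by auto
qed

lemma flag_no_succ_unique:
  assumes y: "flag y" and z: "flag z" and ny: "\<not> has_flag_succ y" and nz: "\<not> has_flag_succ z"
  shows "y = z"
proof -
  have upper_levels: "y ! i = z ! i" if "0 < i" "i \<le> n" for i
    using that(2)
  proof (induction i rule: inc_induct)
    case base
    show ?case using flag_top y z by simp
  next
    case (step k)
    then show ?case
      using no_flag_succ_targets[OF y ny, of k] no_flag_succ_targets[OF z nz, of k] that(1) by simp
  qed
  have "y ! 0 \<in> bd g d (y ! 1)" "z ! 0 \<in> bd g d (z ! 1)"
    using flag_bd y z dim_pos by auto
  moreover obtain v where "d (y ! 1) = {v}" using edge_single_source flag_face[OF y, of 1] dim_pos by auto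
  moreover have "y ! 1 = z ! 1" using upper_levels dim_pos by simp
  ultimately have "y ! 0 = z ! 0"
    using no_flag_succ_bottom[OF y ny] no_flag_succ_bottom[OF z nz] unfolding bd_def by auto
  then have "y ! i = z ! i" if "i < Suc n" for i
    using upper_levels that by (cases i) auto
  then show ?thesis using flag_length y z by (intro nth_equalityI) auto
qed

lemma flag_succ_immediate:
  assumes x: "flag x" "flag x'" "flag_lt S g d x x'"
    and immediate: "\<not> (\<exists>z. flag z \<and> flag_lt S g d x z \<and> flag_lt S g d z x')"
  shows "has_flag_succ x \<and> flag_succ x = x'"
proof -
  have fin: "finite {y. flag y \<and> \<not> has_flag_succ y}"
    using finite_flags by (rule finite_subset[rotated]) auto
  have "card {y. flag y \<and> \<not> has_flag_succ y} \<le> 1"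
    unfolding One_nat_def card_le_Suc0_iff_eq[OF fin] using flag_no_succ_unique by blast
  moreover have "{y. flag y} - {y. has_flag_succ y} = {y. flag y \<and> \<not> has_flag_succ y}"
    unfolding has_flag_succ_def by blast
  ultimately have last: "card ({y. flag y} - {y. has_flag_succ y}) \<le> 1" by simp
  have "x \<in> {y. has_flag_succ y} \<and> flag_succ x = x'"
  proof (rule immediate_successor_by_counting[where less = "flag_lt S g d", OF finite_flags _ _ _ _ _ inj_on_flag_succ _ last])
    show "\<And>a b c. a \<in> {y. flag y} \<Longrightarrow> b \<in> {y. flag y} \<Longrightarrow> c \<in> {y. flag y} \<Longrightarrow>
        flag_lt S g d a b \<Longrightarrow> flag_lt S g d b c \<Longrightarrow> flag_lt S g d a c"
      using flag_lt_trans by blast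
    show "\<And>a. \<not> flag_lt S g d a a" by (rule flag_lt_irrefl)
    show "\<And>a b. a \<in> {y. flag y} \<Longrightarrow> b \<in> {y. flag y} \<Longrightarrow> a \<noteq> b \<Longrightarrow>
        flag_lt S g d a b \<or> flag_lt S g d b a"
      using flag_lt_total by blast
    show "{y. has_flag_succ y} \<subseteq> {y. flag y}" unfolding has_flag_succ_def by blast
    show "flag_succ ` {y. has_flag_succ y} \<subseteq> {y. flag y}" using flag_flag_succ by blast
  qed (use x immediate flag_lt_flag_succ in auto)
  then show ?thesis by simp
qed

lemma flag_inter_flag_succ:
  assumes succ: "has_flag_succ y"
  shows "flag_inter y (flag_succ y) = punct y (swap_level y)"
    and "flag_inter y (flag_succ y) = punct (flag_succ y) (swap_level y)"
proof -
  have "length y = Suc n" using succ flag_length unfolding has_flag_succ_def by blast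
  moreover have "swap_level y < n" using swap_level_less[OF succ] .
  moreover have "partner y (swap_level y) \<noteq> y ! swap_level y"
    using flag_partner_swap_level[OF succ] unfolding flag_partner_def by blast
  ultimately show "flag_inter y (flag_succ y) = punct y (swap_level y)"
    and "flag_inter y (flag_succ y) = punct (flag_succ y) (swap_level y)"
    unfolding flag_succ_def by (intro flag_inter_eq_punct; simp)+
qed

lemma high_pflag_flag_succ:
  "has_flag_succ y \<Longrightarrow> sgnto g y n = 1 \<Longrightarrow> high_pflag S g d n (flag_inter y (flag_succ y))"
  unfolding high_pflag_def using flag_inter_flag_succ(1)
  unfolding has_flag_succ_def swap_level_def by auto

lemma low_pflag_flag_succ:
  assumes succ: "has_flag_succ y" and neg: "sgnto g y n = -1"
  shows "low_pflag S g d n (flag_inter y (flag_succ y))"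
  unfolding low_pflag_def
proof (intro exI conjI)
  show "flag (flag_succ y)" using flag_flag_succ[OF succ] .
  show "flag y" "flag_lt S g d y (flag_succ y)"
    using succ flag_lt_flag_succ[OF succ] unfolding has_flag_succ_def by auto
  have "has_flag_succ (flag_succ y)"
    using flag_flag_succ[OF succ] sgnto_flag_succ[OF succ] neg unfolding has_flag_succ_def by simp
  then show "flag (flag_succ (flag_succ y))" "flag_lt S g d (flag_succ y) (flag_succ (flag_succ y))"
    using flag_flag_succ flag_lt_flag_succ by blast+
  show "ll_set d n (flag_succ y) \<noteq> {}"
    "flag_inter y (flag_succ y) = punct (flag_succ y) (Max (ll_set d n (flag_succ y)))"
    using ll_set_flag_succ[OF succ] flag_inter_flag_succ(2)[OF succ] neg by simp_all
qed

end

theorem mainTheorem11: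
  fixes S :: "nat \<Rightarrow> 'a set" and g :: "'a \<Rightarrow> 'a" and d :: "'a \<Rightarrow> 'a set"
    and n :: nat and x x' :: "'a list"
  assumes "pos_opetope S g d"
    and "has_dim S n"
    and "max_flag S g d n x"
    and "max_flag S g d n x'"
    and "flag_lt S g d x x'"
    and "\<not> (\<exists>z. max_flag S g d n z \<and> flag_lt S g d x z \<and> flag_lt S g d z x')"
  shows "pflag S g d n (flag_inter x x') \<and>
         (flag_sgn g n x = 1 \<longrightarrow> high_pflag S g d n (flag_inter x x')) \<and>
         (flag_sgn g n x = -1 \<longrightarrow> low_pflag S g d n (flag_inter x x'))"
proof -
  have "x \<noteq> x'" using assms(5) flag_lt_irrefl by blast
  then have "0 < n" using assms(3,4) unfolding max_flag_def by (auto intro: nth_equalityI)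
  then interpret pos_cardinal_flags S g d n
    using assms(1) by unfold_locales (simp add: pos_opetope_def)
  have "has_flag_succ x" and "x' = flag_succ x"
    using flag_succ_immediate assms(3-6) by blast+
  then show ?thesis
    using high_pflag_flag_succ low_pflag_flag_succ sgnto_eq_1_or_minus_1[of g x n]
    unfolding pflag_def flag_sgn_def by auto
qed

end
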